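(* Let $S$ be a simple $(l,r)$-framed algebra, $\alpha\in C_S$, $(d^1,c^1),(d^2,c^2)\in I_S$, $a\in S_{(0,\alpha)}$, $v_1\in S_{(d^1,c^1)}$, $v_2\in S_{(d^2,c^2)}$. Then for every $\gamma\in\mathbb{Z}_2^{d^1d^2}$, $a\cdot\big(v_1\cdot_{(d^1+d^2,(d^1+d^2)_\perp(c^1+c^2)+\gamma)}v_2\big)=(-1)^{\frac12|d^1\alpha|}(-1)^{|\alpha c^1|+|d^1d^2\alpha|+|\gamma\alpha|+|d^1\alpha c^2|}\,v_1\cdot_{(d^1+d^2,(d^1+d^2)_\perp(c^1+c^2+\alpha)+\gamma)}(a\cdot v_2)$, and $a\cdot(v_1\cdot v_2)=(-1)^{|d^1_\perp\alpha|+|d^1\alpha c^2|}(a\cdot v_1)\cdot v_2$.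
   Context: Let $\mathrm{IS}=\{0,\frac12,\frac1{16}\}$ with fusion rule $\star$ (values are subsets): $0\star h=h\star0=\{h\}$, $\frac12\star\frac12=\{0\}$, $\frac12\star\frac1{16}=\frac1{16}\star\frac12=\{\frac1{16}\}$, $\frac1{16}\star\frac1{16}=\{0,\frac12\}$; $A(h_0,h_1,h_2,h_3)=\{h: h\in h_2\star h_3,\ h_0\in h_1\star h\}$. For $h\in A(h_0,h_1,h_2,h_3)$, $h'\in A(h_0,h_2,h_1,h_3)$ define $B^{h,h'}_{h_0,h_1,h_2,h_3}$: $B_{*,0,*,*}=B_{*,*,0,*}=1$; $B_{*,\frac12,\frac12,*}=-1$; $B_{a,\frac12,\frac1{16},a'}=B_{a,\frac1{16},\frac12,a'}=i$ if $a$ or $a'$ is $\frac12$, else $-i$; $B^{b,b'}_{a,\frac1{16},\frac1{16},a'}=e^{-\pi i/8}\cdot\{1$ if $a,a'\ne\frac1{16},a=a'$; $i$ if $a,a'\neq\frac1{16},a\ne a'$; $\frac{1+i}2$ if $a=a'=\frac1{16},b=b'$; $\frac{1-i}2$ if $a=a'=\frac1{16},b\neq b'\}$. $\mathrm{IS}^{(l,r)}=\mathrm{IS}^l\times\mathrm{IS}^r$, $\lambda=(h_1,..,h_l,\bar h_1,..,\bar h_r)$, $s(\lambda)=\sum h_i-\sum\bar h_j$; $\star$, $A$ componentwise; $B^{\lambda,\lambda'}_{\lambda^0,\dots,\lambda^3}=\prod_{i\le l}B^{h_i,h'_i}_{h^0_i,\dots,h^3_i}\prod_{j\le r}\overline{B^{\bar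 h_j,\bar h'_j}_{\bar h^0_j,\dots,\bar h^3_j}}$. An $(l,r)$-framed algebra: finite-dimensional $\mathrm{IS}^{(l,r)}$-graded $S=\bigoplus S_\lambda$ over $\mathbb{C}$ with bilinear product, nonzero $1\in S_0$, $a\cdot_\lambda b$ the $S_\lambda$-component of $a\cdot b$, satisfying (FA1) $S_\lambda=0$ unless $s(\lambda)\in\mathbb{Z}$; (FA2) $S_0=\mathbb{C}1$, $1$ a two-sided unit; (FA3) $S_{\lambda^1}\cdot S_{\lambda^2}\subset\bigoplus_{\lambda\in\lambda^1\star\lambda^2}S_\lambda$; (FA4) $a_2\cdot_{\lambda^0}(a_1\cdot_{\lambda'}a_3)=\sum_{\lambda\in A(\lambda^0,\lambda^1,\lambda^2,\lambda^3)}B^{\lambda,\lambda'}_{\lambda^0,\lambda^1,\lambda^2,\lambda^3}a_1\cdot_{\lambda^0}(a_2\cdot_\lambda a_3)$ for $a_i\in S_{\lambda^i}$, $\lambda'\in A(\lambda^0,\lambda^2,\lambda^1,\lambda^3)$. Ideal: graded subspace $M$ with $S\cdot M\subset M$; simple: only ideals $0$ and $S$. Identify $\mathrm{IS}$ with $\{(d,c)\in\mathbb{Z}_2^2:dc=0\}$ via $0\leftrightarrow(0,0)$, $\frac12\leftrightarrow(0,1)$, $\frac1{16}\leftrightarrow(1,0)$, and componentwise $\mathrm{IS}^{(l,r)}$ with pairs $(d,c)\in(\mathbb{Z}_2^{l+r})^2$, $dc=0$ (componentwise product); $S_{(d,c)}$ is the graded piece. For $c\in\mathbb{Z}_2^{l+r}$,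 $|c|=|c|_l-|c|_r$ with $|c|_l,|c|_r$ the numbers of ones in the first $l$, last $r$ coordinates; $d_\perp=1^{l+r}+d$; $\mathbb{Z}_2^d=\{\gamma:d\gamma=\gamma\}$. $C_S=\{\alpha:S_{(0,\alpha)}\neq0\}$, $I_S=\{(d,c):S_{(d,c)}\ne0\}$. *)

theory Defs
  imports Complex_Main
begin

datatype IS = H0 | Hhalf | Hsix

fun hval :: "IS \<Rightarrow> rat" where
  "hval H0 = 0" | "hval Hhalf = 1/2" | "hval Hsix = 1/16"

fun fusion :: "IS \<Rightarrow> IS \<Rightarrow> IS set" where
  "fusion H0 h = {h}"
| "fusion h H0 = {h}"
| "fusion Hhalf Hhalf = {H0}"
| "fusion Hhalf Hsix = {Hsix}"
| "fusion Hsix Hhalf = {Hsix}"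
| "fusion Hsix Hsix = {H0, Hhalf}"

definition A0 :: "IS \<Rightarrow> IS \<Rightarrow> IS \<Rightarrow> IS \<Rightarrow> IS set" where
  "A0 h0 h1 h2 h3 = {h. h \<in> fusion h2 h3 \<and> h0 \<in> fusion h1 h}"

(* B^{h,h'}_{h0,h1,h2,h3}  (argument order: h h' h0 h1 h2 h3) *)
definition Bc :: "IS \<Rightarrow> IS \<Rightarrow> IS \<Rightarrow> IS \<Rightarrow> IS \<Rightarrow> IS \<Rightarrow> complex" where
  "Bc h h' h0 h1 h2 h3 =
    (if h1 = H0 \<or> h2 = H0 then 1
     else if h1 = Hhalf \<and> h2 = Hhalf then -1
     else if h1 = Hsix \<and> h2 = Hsix then
       cis (- pi / 8) *
         (if h0 \<noteq> Hsix \<and> h3 \<noteq> Hsix then (if h0 = h3 then 1 else \<i>)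
          else (if h = h' then (1 + \<i>) / 2 else (1 - \<i>) / 2))
     else (if h0 = Hhalf \<or> h3 = Hhalf then \<i> else - \<i>))"

(* IS^(l,r): lists of length l+r; first l entries are the h_i, last r are the bar h_j *)
definition lams :: "nat \<Rightarrow> nat \<Rightarrow> IS list set" where
  "lams l r = {la. length la = l + r}"

definition lzero :: "nat \<Rightarrow> nat \<Rightarrow> IS list" where
  "lzero l r = replicate (l + r) H0"

definition sdim :: "nat \<Rightarrow> nat \<Rightarrow> IS list \<Rightarrow> rat" where
  "sdim l r la = (\<Sum>i<l. hval (la ! i)) - (\<Sum>j\<in>{l..<l+r}. hval (la ! j))"

definition lfus :: "IS list \<Rightarrow> IS list \<Rightarrow> IS list set" where
  "lfus la1 la2 = {la. length la = length la1 \<and>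
      (\<forall>i<length la1. la ! i \<in> fusion (la1 ! i) (la2 ! i))}"

definition lA :: "IS list \<Rightarrow> IS list \<Rightarrow> IS list \<Rightarrow> IS list \<Rightarrow> IS list set" where
  "lA la0 la1 la2 la3 = {la. length la = length la0 \<and>
      (\<forall>i<length la0. la ! i \<in> A0 (la0 ! i) (la1 ! i) (la2 ! i) (la3 ! i))}"

definition lB :: "nat \<Rightarrow> nat \<Rightarrow> IS list \<Rightarrow> IS list \<Rightarrow> IS list \<Rightarrow> IS list \<Rightarrow> IS list \<Rightarrow> IS list \<Rightarrow> complex" where
  "lB l r la la' la0 la1 la2 la3 =
     (\<Prod>i<l. Bc (la ! i) (la' ! i) (la0 ! i) (la1 ! i) (la2 ! i) (la3 ! i)) *
     (\<Prod>j\<in>{l..<l+r}. cnj (Bc (la ! j) (la' ! j) (la0 ! j) (la1 ! j) (la2 ! j) (la3 ! j)))"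

definition graded_decomp :: "nat \<Rightarrow> nat \<Rightarrow> (IS list \<Rightarrow> 'v::ab_group_add set) \<Rightarrow> 'v \<Rightarrow> (IS list \<Rightarrow> 'v) \<Rightarrow> bool" where
  "graded_decomp l r G v x \<longleftrightarrow> (\<forall>la\<in>lams l r. x la \<in> G la) \<and> (\<forall>la. la \<notin> lams l r \<longrightarrow> x la = 0)
      \<and> v = (\<Sum>la\<in>lams l r. x la)"

definition comp :: "nat \<Rightarrow> nat \<Rightarrow> (IS list \<Rightarrow> 'v::ab_group_add set) \<Rightarrow> IS list \<Rightarrow> 'v \<Rightarrow> 'v" where
  "comp l r G la v = (THE x. graded_decomp l r G v x) la"

definition framed_algebra ::
  "nat \<Rightarrow> nat \<Rightarrow> (complex \<Rightarrow> 'v::ab_group_add \<Rightarrow> 'v) \<Rightarrow> (IS list \<Rightarrow> 'v set) \<Rightarrow> ('v \<Rightarrow> 'v \<Rightarrow> 'v) \<Rightarrow> 'v \<Rightarrow> bool" where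
  "framed_algebra l r sc G mult one \<longleftrightarrow>
     vector_space sc
   \<and> (\<exists>B. finite B \<and> module.span sc B = UNIV)
   \<and> (\<forall>la. module.subspace sc (G la))
   \<and> (\<forall>la. la \<notin> lams l r \<longrightarrow> G la = {0})
   \<and> (\<forall>v. \<exists>!x. graded_decomp l r G v x)
   \<and> (\<forall>a. Vector_Spaces.linear sc sc (mult a))
   \<and> (\<forall>b. Vector_Spaces.linear sc sc (\<lambda>a. mult a b))
   \<and> one \<noteq> 0 \<and> one \<in> G (lzero l r)
   \<comment> \<open>FA1\<close>
   \<and> (\<forall>la\<in>lams l r. G la \<noteq> {0} \<longrightarrow> sdim l r la \<in> \<int>)
   \<comment> \<open>FA2\<close>
   \<and> G (lzero l r) = {sc c one | c. True}
   \<and> (\<forall>a. mult one a = a \<and> mult a one = a)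
   \<comment> \<open>FA3\<close>
   \<and> (\<forall>la1\<in>lams l r. \<forall>la2\<in>lams l r. \<forall>a\<in>G la1. \<forall>b\<in>G la2.
        mult a b \<in> module.span sc (\<Union>la\<in>lfus la1 la2. G la))
   \<comment> \<open>FA4\<close>
   \<and> (\<forall>la0\<in>lams l r. \<forall>la1\<in>lams l r. \<forall>la2\<in>lams l r. \<forall>la3\<in>lams l r.
        \<forall>a1\<in>G la1. \<forall>a2\<in>G la2. \<forall>a3\<in>G la3. \<forall>la'\<in>lA la0 la2 la1 la3.
          comp l r G la0 (mult a2 (comp l r G la' (mult a1 a3))) =
          (\<Sum>la\<in>lA la0 la1 la2 la3. sc (lB l r la la' la0 la1 la2 la3)
               (comp l r G la0 (mult a1 (comp l r G la (mult a2 a3))))))"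

definition fa_ideal ::
  "nat \<Rightarrow> nat \<Rightarrow> (complex \<Rightarrow> 'v::ab_group_add \<Rightarrow> 'v) \<Rightarrow> (IS list \<Rightarrow> 'v set) \<Rightarrow> ('v \<Rightarrow> 'v \<Rightarrow> 'v) \<Rightarrow> 'v set \<Rightarrow> bool" where
  "fa_ideal l r sc G mult M \<longleftrightarrow>
     module.subspace sc M
   \<and> M = module.span sc (\<Union>la\<in>lams l r. M \<inter> G la)
   \<and> (\<forall>s. \<forall>m\<in>M. mult s m \<in> M)"

definition simple_framed_algebra ::
  "nat \<Rightarrow> nat \<Rightarrow> (complex \<Rightarrow> 'v::ab_group_add \<Rightarrow> 'v) \<Rightarrow> (IS list \<Rightarrow> 'v set) \<Rightarrow> ('v \<Rightarrow> 'v \<Rightarrow> 'v) \<Rightarrow> 'v \<Rightarrow> bool" where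
  "simple_framed_algebra l r sc G mult one \<longleftrightarrow>
     framed_algebra l r sc G mult one
   \<and> (\<forall>M. fa_ideal l r sc G mult M \<longrightarrow> M = {0} \<or> M = UNIV)"

(* Z_2 vectors as bool lists of length l+r *)
definition xorL :: "bool list \<Rightarrow> bool list \<Rightarrow> bool list" where
  "xorL x y = map2 (\<lambda>a b. a \<noteq> b) x y"

definition andL :: "bool list \<Rightarrow> bool list \<Rightarrow> bool list" where
  "andL x y = map2 (\<and>) x y"

definition perpL :: "bool list \<Rightarrow> bool list" where
  "perpL d = map Not d"

(* |c| = |c|_l - |c|_r *)
definition wt :: "nat \<Rightarrow> bool list \<Rightarrow> int" where
  "wt l c = int (length (filter id (take l c))) - int (length (filter id (drop l c)))"

definition Z2sub :: "bool list \<Rightarrow> bool list set" where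
  "Z2sub d = {\<gamma>. length \<gamma> = length d \<and> andL d \<gamma> = \<gamma>}"

(* identification IS ~ {(d,c) : dc = 0}: 0 ~ (0,0), 1/2 ~ (0,1), 1/16 ~ (1,0) *)
definition toIS :: "bool list \<Rightarrow> bool list \<Rightarrow> IS list" where
  "toIS d c = map2 (\<lambda>x y. if x then Hsix else if y then Hhalf else H0) d c"

definition valid_dc :: "nat \<Rightarrow> nat \<Rightarrow> bool list \<Rightarrow> bool list \<Rightarrow> bool" where
  "valid_dc l r d c \<longleftrightarrow> length d = l + r \<and> length c = l + r \<and> andL d c = replicate (l + r) False"

definition Sdc :: "(IS list \<Rightarrow> 'v set) \<Rightarrow> bool list \<Rightarrow> bool list \<Rightarrow> 'v set" where
  "Sdc G d c = G (toIS d c)"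

definition C_S :: "nat \<Rightarrow> nat \<Rightarrow> (IS list \<Rightarrow> 'v::zero set) \<Rightarrow> bool list set" where
  "C_S l r G = {\<alpha>. valid_dc l r (replicate (l + r) False) \<alpha> \<and> Sdc G (replicate (l + r) False) \<alpha> \<noteq> {0}}"

definition I_S :: "nat \<Rightarrow> nat \<Rightarrow> (IS list \<Rightarrow> 'v::zero set) \<Rightarrow> (bool list \<times> bool list) set" where
  "I_S l r G = {(d, c). valid_dc l r d c \<and> Sdc G d c \<noteq> {0}}"

end

theory Submission
  imports Defs
begin

text \<open>
  A nonzero \<open>a\<close> of grade \<open>(0, \<alpha>)\<close> is a simple current: its grade has no entry \<open>1/16\<close>,
  so fusing with it is an involution \<open>\<lambda> \<mapsto> \<mu>\<lambda>\<close> of the labels and every instance of FA4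
  in which it occurs has a single term on the right. Taking \<open>a\<close> as the middle factor moves it
  past \<open>v\<^sub>1\<close> inside each graded component, with the braiding coefficient computed entry by
  entry; this is the first identity. For the second, \<open>(a v\<^sub>1) v\<^sub>2\<close> is related to
  \<open>a (v\<^sub>1 v\<^sub>2)\<close> componentwise by commuting \<open>v\<^sub>2\<close> past \<open>a v\<^sub>1\<close> (FA4 with unit third
  factor), moving \<open>a\<close> outwards, and commuting back.
  The remaining signs disappear by parity: in a simple algebra the kernel of \<open>x \<mapsto> a x\<close> is an
  ideal not containing \<open>1\<close>, so \<open>a v\<^sub>1 \<noteq> 0\<close>, and FA1 for the grades of \<open>a\<close>, \<open>v\<^sub>1\<close>, \<open>a v\<^sub>1\<close>
  makes \<open>|d\<^sub>1\<alpha>|\<close> and \<open>|(d\<^sub>1)\<^sub>\<bottom>\<alpha>|\<close> even.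
\<close>

definition dc_label :: "bool \<Rightarrow> bool \<Rightarrow> IS" where
  "dc_label d c = (if d then Hsix else if c then Hhalf else H0)"

lemma length_toIS [simp]: "length (toIS d c) = min (length d) (length c)"
  unfolding toIS_def by simp

lemma nth_toIS [simp]: "i < length d \<Longrightarrow> i < length c \<Longrightarrow> toIS d c ! i = dc_label (d ! i) (c ! i)"
  unfolding toIS_def dc_label_def by simp

lemma length_andL [simp]: "length (andL x y) = min (length x) (length y)"
  unfolding andL_def by simp

lemma nth_andL [simp]: "i < length x \<Longrightarrow> i < length y \<Longrightarrow> andL x y ! i = (x ! i \<and> y ! i)"
  unfolding andL_def by simp

lemma length_xorL [simp]: "length (xorL x y) = min (length x) (length y)"
  unfolding xorL_def by simp

lemma nth_xorL [simp]: "i < length x \<Longrightarrow> i < length y \<Longrightarrow> xorL x y ! i = (x ! i \<noteq> y ! i)"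
  unfolding xorL_def by simp

lemma length_perpL [simp]: "length (perpL x) = length x"
  unfolding perpL_def by simp

lemma nth_perpL [simp]: "i < length x \<Longrightarrow> perpL x ! i = (\<not> x ! i)"
  unfolding perpL_def by simp

lemma valid_dc_disjoint: "valid_dc l r d c \<Longrightarrow> i < l + r \<Longrightarrow> \<not> (d ! i \<and> c ! i)"
  unfolding valid_dc_def by (metis nth_andL nth_replicate)

lemma lams_iff: "la \<in> lams l r \<longleftrightarrow> length la = l + r"
  unfolding lams_def by simp

lemma finite_lams: "finite (lams l r)"
proof -
  have "UNIV = {H0, Hhalf, Hsix}"
    using IS.exhaust by blast
  then have "finite (UNIV :: IS set)"
    by (metis finite.emptyI finite.insertI)
  then show ?thesis
    using finite_lists_length_eq[of "UNIV :: IS set"] by (simp add: lams_def)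
qed

section \<open>Chiral products and sums\<close>

definition chiral_prod :: "nat \<Rightarrow> nat \<Rightarrow> (nat \<Rightarrow> complex) \<Rightarrow> complex" where
  "chiral_prod l r f = (\<Prod>i<l. f i) * (\<Prod>j\<in>{l..<l+r}. cnj (f j))"

definition chiral_sum :: "nat \<Rightarrow> nat \<Rightarrow> (nat \<Rightarrow> rat) \<Rightarrow> rat" where
  "chiral_sum l r f = (\<Sum>i<l. f i) - (\<Sum>j\<in>{l..<l+r}. f j)"

lemma lB_eq_chiral_prod:
  "lB l r la la' la0 la1 la2 la3 =
     chiral_prod l r (\<lambda>i. Bc (la!i) (la'!i) (la0!i) (la1!i) (la2!i) (la3!i))"
  unfolding lB_def chiral_prod_def ..

lemma sdim_eq_chiral_sum: "sdim l r la = chiral_sum l r (\<lambda>i. hval (la ! i))"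
  unfolding sdim_def chiral_sum_def ..

lemma chiral_prod_mult: "chiral_prod l r (\<lambda>i. f i * g i) = chiral_prod l r f * chiral_prod l r g"
  unfolding chiral_prod_def by (simp add: prod.distrib)

lemma chiral_prod_cong: "(\<And>i. i < l + r \<Longrightarrow> f i = g i) \<Longrightarrow> chiral_prod l r f = chiral_prod l r g"
  unfolding chiral_prod_def by (intro arg_cong2[where f="(*)"] prod.cong) auto

lemma chiral_prod_nonzero: "(\<And>i. i < l + r \<Longrightarrow> f i \<noteq> 0) \<Longrightarrow> chiral_prod l r f \<noteq> 0"
  unfolding chiral_prod_def by auto

lemma chiral_sum_diff: "chiral_sum l r (\<lambda>i. f i - g i) = chiral_sum l r f - chiral_sum l r g"
  unfolding chiral_sum_def by (simp add: sum_subtractf)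

lemma chiral_sum_add: "chiral_sum l r (\<lambda>i. f i + g i) = chiral_sum l r f + chiral_sum l r g"
  unfolding chiral_sum_def by (simp add: sum.distrib)

lemma chiral_sum_divide: "chiral_sum l r (\<lambda>i. f i / c) = chiral_sum l r f / c"
  unfolding chiral_sum_def by (simp add: sum_divide_distrib diff_divide_distrib)

lemma chiral_sum_Ints: "(\<And>i. i < l + r \<Longrightarrow> f i \<in> \<int>) \<Longrightarrow> chiral_sum l r f \<in> \<int>"
  unfolding chiral_sum_def by (intro Ints_diff Ints_sum) auto

lemma power_length_filter: "z ^ length (filter id xs) = (\<Prod>i<length xs. if xs ! i then z else 1)"
  by (induction xs) (simp_all add: prod.lessThan_Suc_shift del: prod.lessThan_Suc)

lemma of_nat_length_filter: "of_nat (length (filter id xs)) = (\<Sum>i<length xs. if xs ! i then 1 else 0)"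
  by (induction xs) (simp_all add: sum.lessThan_Suc_shift del: sum.lessThan_Suc)

lemma chiral_prod_powi_wt:
  assumes "cnj z = inverse z" "z \<noteq> 0" "length x = l + r"
  shows "chiral_prod l r (\<lambda>i. if x ! i then z else 1) = z powi wt l x"
proof -
  have "z powi wt l x = z ^ length (filter id (take l x)) * cnj (z ^ length (filter id (drop l x)))"
    using assms(1,2) by (simp add: wt_def power_int_diff divide_inverse power_inverse)
  then show ?thesis
    using assms(3)
    by (simp add: chiral_prod_def power_length_filter cnj_prod prod.atLeastLessThan_shift_0
        atLeast0LessThan if_distrib)
qed

lemma chiral_sum_of_int_wt:
  assumes "length x = l + r"
  shows "chiral_sum l r (\<lambda>i. if x ! i then 1 else 0) = of_int (wt l x)"
  unfolding wt_def of_int_diff of_int_of_nat_eq of_nat_length_filter[where 'a=rat]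
  using assms by (simp add: chiral_sum_def sum.atLeastLessThan_shift_0 atLeast0LessThan)

lemma even_wt_if_half_Ints:
  assumes "length x = l + r" "chiral_sum l r f \<in> \<int>"
    and "\<And>i. i < l + r \<Longrightarrow> f i - (if x ! i then 1 else 0) / 2 \<in> \<int>"
  shows "even (wt l x)"
proof -
  have "chiral_sum l r (\<lambda>i. f i - (if x ! i then 1 else 0) / 2) \<in> \<int>"
    using assms(3) by (rule chiral_sum_Ints)
  then have "chiral_sum l r f - of_int (wt l x) / 2 \<in> \<int>"
    by (simp only: chiral_sum_diff chiral_sum_divide chiral_sum_of_int_wt[OF assms(1)])
  then have "chiral_sum l r f - (chiral_sum l r f - of_int (wt l x) / 2) \<in> \<int>"
    by (rule Ints_diff[OF assms(2)])
  then obtain k where "(of_int (wt l x) :: rat) / 2 = of_int k"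
    by (auto elim: Ints_cases)
  then have "(of_int (wt l x) :: rat) = of_int (2 * k)"
    by simp
  then show ?thesis
    by (simp only: of_int_eq_iff) simp
qed

section \<open>Fusion with simple currents\<close>

text \<open>The unique element of \<^term>\<open>fusion m h\<close> when \<^term>\<open>m \<noteq> Hsix\<close>; the clause for \<^term>\<open>Hsix\<close> is junk.\<close>

fun fuse_simple :: "IS \<Rightarrow> IS \<Rightarrow> IS" where
  "fuse_simple H0 h = h"
| "fuse_simple Hhalf H0 = Hhalf"
| "fuse_simple Hhalf Hhalf = H0"
| "fuse_simple Hhalf Hsix = Hsix"
| "fuse_simple Hsix h = h"

lemma fusion_simple: "m \<noteq> Hsix \<Longrightarrow> fusion m h = {fuse_simple m h}"
  by (cases m; cases h) auto

lemma fuse_simple_involutive: "m \<noteq> Hsix \<Longrightarrow> fuse_simple m (fuse_simple m h) = h"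
  by (cases m; cases h) auto

lemma fuse_simple_mem_fusion_iff:
  "m \<noteq> Hsix \<Longrightarrow> fuse_simple m h \<in> fusion h1 (fuse_simple m h3) \<longleftrightarrow> h \<in> fusion h1 h3"
  by (cases m; cases h; cases h1; cases h3) auto

lemma fusion_commute: "fusion h1 h2 = fusion h2 h1"
  by (cases h1; cases h2) auto

lemma fusion_H0_right: "fusion h H0 = {h}"
  by (cases h) auto

lemma fuse_simple_dc_label:
  "fuse_simple (dc_label False a) (dc_label d c) = dc_label d (c \<noteq> (\<not> d \<and> a))"
  by (cases a; cases d; cases c) (simp_all add: dc_label_def)

definition simple_current :: "IS list \<Rightarrow> bool" where
  "simple_current mu \<longleftrightarrow> (\<forall>i<length mu. mu ! i \<noteq> Hsix)"

definition lfuse_simple :: "IS list \<Rightarrow> IS list \<Rightarrow> IS list" where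
  "lfuse_simple mu la = map2 fuse_simple mu la"

lemma length_lfuse_simple [simp]: "length (lfuse_simple mu la) = min (length mu) (length la)"
  unfolding lfuse_simple_def by simp

lemma nth_lfuse_simple [simp]:
  "i < length mu \<Longrightarrow> i < length la \<Longrightarrow> lfuse_simple mu la ! i = fuse_simple (mu ! i) (la ! i)"
  unfolding lfuse_simple_def by simp

lemma lfuse_simple_lams: "mu \<in> lams l r \<Longrightarrow> la \<in> lams l r \<Longrightarrow> lfuse_simple mu la \<in> lams l r"
  unfolding lams_iff by simp

lemma lfuse_simple_involutive:
  "simple_current mu \<Longrightarrow> length la = length mu \<Longrightarrow> lfuse_simple mu (lfuse_simple mu la) = la"
  by (rule nth_equalityI) (auto simp: simple_current_def fuse_simple_involutive)

lemma lfus_iff: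
  "la \<in> lfus la1 la2 \<longleftrightarrow> length la = length la1 \<and> (\<forall>i<length la1. la ! i \<in> fusion (la1 ! i) (la2 ! i))"
  unfolding lfus_def by simp

lemma lA_iff:
  "la \<in> lA la0 la1 la2 la3 \<longleftrightarrow> length la = length la0 \<and>
     (\<forall>i<length la0. la ! i \<in> fusion (la2 ! i) (la3 ! i) \<and> la0 ! i \<in> fusion (la1 ! i) (la ! i))"
  unfolding lA_def A0_def by simp

lemma lfus_simple_current:
  assumes "simple_current mu" "length la = length mu"
  shows "lfus mu la = {lfuse_simple mu la}"
  using assms by (auto simp: lfus_iff simple_current_def fusion_simple intro!: nth_equalityI)

lemma lfuse_simple_mem_lfus_iff:
  assumes "simple_current mu" "length la = length mu" "length la1 = length mu" "length la3 = length mu"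
  shows "lfuse_simple mu la \<in> lfus la1 (lfuse_simple mu la3) \<longleftrightarrow> la \<in> lfus la1 la3"
  using assms by (auto simp: lfus_iff simple_current_def fuse_simple_mem_fusion_iff)

lemma lfus_commute: "length la1 = length la2 \<Longrightarrow> lfus la1 la2 = lfus la2 la1"
  by (auto simp: lfus_iff fusion_commute)

lemma lA_simple_current_middle:
  assumes "simple_current mu" "length mu = n" "length la0 = n" "length la1 = n" "length la3 = n"
  shows "lA la0 la1 mu la3 = (if la0 \<in> lfus la1 (lfuse_simple mu la3) then {lfuse_simple mu la3} else {})"
  using assms by (auto simp: lA_iff lfus_iff simple_current_def fusion_simple intro!: nth_equalityI; metis)

lemma lA_simple_current_left:
  assumes "simple_current mu" "length mu = n" "length la0 = n" "length la1 = n" "length la3 = n"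
  shows "lA la0 mu la1 la3 = (if lfuse_simple mu la0 \<in> lfus la1 la3 then {lfuse_simple mu la0} else {})"
  using assms
  by (auto simp: lA_iff lfus_iff simple_current_def fusion_simple fuse_simple_involutive
      intro!: nth_equalityI)

lemma lA_unit:
  assumes "length la0 = n" "length la1 = n" "length la2 = n"
  shows "lA la0 la1 la2 (replicate n H0) = (if la0 \<in> lfus la1 la2 then {la2} else {})"
  using assms by (auto simp: lA_iff lfus_iff fusion_H0_right intro!: nth_equalityI; metis)

lemma simple_current_toIS: "simple_current (toIS (replicate n False) \<alpha>)"
  by (simp add: simple_current_def dc_label_def)

lemma lfuse_simple_toIS:
  assumes "length \<alpha> = n" "length d = n" "length c = n"
  shows "lfuse_simple (toIS (replicate n False) \<alpha>) (toIS d c) = toIS d (xorL c (andL (perpL d) \<alpha>))"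
  using assms by (intro nth_equalityI) (simp_all add: fuse_simple_dc_label)

lemma hval_fuse_simple_dc_label:
  "hval (dc_label d (c \<noteq> (\<not> d \<and> a))) - hval (dc_label d c) - (if \<not> d \<and> a then 1 else 0) / 2 \<in> \<int>"
  "hval (dc_label d (c \<noteq> (\<not> d \<and> a))) - hval (dc_label d c) + hval (dc_label False a)
     - (if d \<and> a then 1 else 0) / 2 \<in> \<int>"
  by (cases d; cases c; cases a; simp add: dc_label_def)+

lemma Bc_exchange_entry:
  fixes d1 c1 d2 c2 g a :: bool
  assumes "\<not> (d1 \<and> c1)" "\<not> (d2 \<and> c2)" "g \<longrightarrow> d1 \<and> d2"
  defines "m \<equiv> dc_label False a" and "h \<equiv> dc_label (d1 \<noteq> d2) ((d1 = d2 \<and> c1 \<noteq> c2) \<noteq> g)"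
  shows "Bc (fuse_simple m (dc_label d2 c2)) h (fuse_simple m h) (dc_label d1 c1) m (dc_label d2 c2) =
           (if d1 \<and> a then \<i> else 1) * (if a \<and> c1 then -1 else 1) * (if (d1 \<and> d2) \<and> a then -1 else 1)
           * (if g \<and> a then -1 else 1) * (if (d1 \<and> a) \<and> c2 then -1 else 1) * (if d1 \<and> a then -1 else 1)"
  using assms by (cases d1; cases c1; cases d2; cases c2; cases g; cases a) (simp_all add: Bc_def dc_label_def)

lemma Bc_commute_entry:
  fixes d1 c1 d2 c2 a :: bool
  assumes "\<not> (d1 \<and> c1)" "\<not> (d2 \<and> c2)" "h \<in> fusion (dc_label d1 c1) (dc_label d2 c2)"
  defines "m \<equiv> dc_label False a"
  shows "Bc h (fuse_simple m (dc_label d1 c1)) (fuse_simple m h) m (dc_label d2 c2) (dc_label d1 c1)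
           * Bc (dc_label d2 c2) (dc_label d1 c1) h (dc_label d1 c1) (dc_label d2 c2) H0 =
         (if (d1 \<and> a) \<and> c2 then -1 else 1)
           * Bc (dc_label d2 c2) (fuse_simple m (dc_label d1 c1)) (fuse_simple m h)
               (fuse_simple m (dc_label d1 c1)) (dc_label d2 c2) H0"
  using assms
  by (cases d1; cases c1; cases d2; cases c2; cases a; cases h) (simp_all add: Bc_def dc_label_def ac_simps)

lemma Bc_nonzero: "Bc h h' h0 h1 h2 h3 \<noteq> 0"
proof -
  have "1 + \<i> \<noteq> 0" "1 - \<i> \<noteq> 0"
    by (simp_all add: complex_eq_iff)
  then show ?thesis
    by (simp add: Bc_def)
qed

lemma chiral_prod_sign: "length x = l + r \<Longrightarrow> chiral_prod l r (\<lambda>i. if x ! i then -1 else 1) = (-1) powi wt l x"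
  by (rule chiral_prod_powi_wt) simp_all

lemma chiral_prod_imag: "length x = l + r \<Longrightarrow> chiral_prod l r (\<lambda>i. if x ! i then \<i> else 1) = \<i> powi wt l x"
  by (rule chiral_prod_powi_wt) simp_all

lemma lB_simple_current_exchange:
  fixes l r :: nat and d1 c1 d2 c2 \<alpha> \<gamma> :: "bool list"
  defines "mu \<equiv> toIS (replicate (l + r) False) \<alpha>"
    and "la \<equiv> toIS (xorL d1 d2) (xorL (andL (perpL (xorL d1 d2)) (xorL c1 c2)) \<gamma>)"
  assumes "valid_dc l r d1 c1" "valid_dc l r d2 c2" "length \<alpha> = l + r" "\<gamma> \<in> Z2sub (andL d1 d2)"
  shows "lB l r (lfuse_simple mu (toIS d2 c2)) la (lfuse_simple mu la) (toIS d1 c1) mu (toIS d2 c2) =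
           \<i> powi wt l (andL d1 \<alpha>)
           * (-1) powi wt l (andL \<alpha> c1) * (-1) powi wt l (andL (andL d1 d2) \<alpha>)
           * (-1) powi wt l (andL \<gamma> \<alpha>) * (-1) powi wt l (andL (andL d1 \<alpha>) c2)
           * (-1) powi wt l (andL d1 \<alpha>)" (is "_ = ?rhs")
proof -
  have lens: "length d1 = l + r" "length c1 = l + r" "length d2 = l + r" "length c2 = l + r"
    "length \<gamma> = l + r"
    using assms(3-6) by (simp_all add: valid_dc_def Z2sub_def)
  have \<gamma>: "\<gamma> ! i \<longrightarrow> d1 ! i \<and> d2 ! i" if "i < l + r" for i
    using assms(6) that lens nth_andL[of i "andL d1 d2" \<gamma>] by (auto simp: Z2sub_def)
  have "lB l r (lfuse_simple mu (toIS d2 c2)) la (lfuse_simple mu la) (toIS d1 c1) mu (toIS d2 c2) =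
      chiral_prod l r (\<lambda>i. (if andL d1 \<alpha> ! i then \<i> else 1) * (if andL \<alpha> c1 ! i then -1 else 1)
        * (if andL (andL d1 d2) \<alpha> ! i then -1 else 1) * (if andL \<gamma> \<alpha> ! i then -1 else 1)
        * (if andL (andL d1 \<alpha>) c2 ! i then -1 else 1) * (if andL d1 \<alpha> ! i then -1 else 1))"
    unfolding lB_eq_chiral_prod
    using lens assms(5) Bc_exchange_entry valid_dc_disjoint[OF assms(3)] valid_dc_disjoint[OF assms(4)] \<gamma>
    by (intro chiral_prod_cong) (simp add: mu_def la_def)
  also have "\<dots> = ?rhs"
    using lens assms(5)
    by (simp only: chiral_prod_mult chiral_prod_sign chiral_prod_imag length_andL min.idem)
  finally show ?thesis .
qed

lemma lB_simple_current_commute: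
  fixes l r :: nat and d1 c1 d2 c2 \<alpha> :: "bool list"
  defines "mu \<equiv> toIS (replicate (l + r) False) \<alpha>"
    and "la1 \<equiv> toIS d1 c1" and "la2 \<equiv> toIS d2 c2"
  assumes "valid_dc l r d1 c1" "valid_dc l r d2 c2" "length \<alpha> = l + r" "la \<in> lfus la1 la2"
  shows "lB l r la (lfuse_simple mu la1) (lfuse_simple mu la) mu la2 la1
           * lB l r la2 la1 la la1 la2 (lzero l r) =
         (-1) powi wt l (andL (andL d1 \<alpha>) c2)
           * lB l r la2 (lfuse_simple mu la1) (lfuse_simple mu la) (lfuse_simple mu la1) la2 (lzero l r)"
proof -
  have lens: "length d1 = l + r" "length c1 = l + r" "length d2 = l + r" "length c2 = l + r"
    "length la = l + r"
    using assms(4-7) by (simp_all add: valid_dc_def lfus_iff la1_def)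
  have fus: "la ! i \<in> fusion (dc_label (d1 ! i) (c1 ! i)) (dc_label (d2 ! i) (c2 ! i))" if "i < l + r" for i
    using assms(7) that lens by (simp add: lfus_iff la1_def la2_def)
  have "lB l r la (lfuse_simple mu la1) (lfuse_simple mu la) mu la2 la1
          * lB l r la2 la1 la la1 la2 (lzero l r) =
        chiral_prod l r (\<lambda>i. (if andL (andL d1 \<alpha>) c2 ! i then -1 else 1)
          * Bc (la2 ! i) (lfuse_simple mu la1 ! i) (lfuse_simple mu la ! i) (lfuse_simple mu la1 ! i)
              (la2 ! i) (lzero l r ! i))"
    unfolding lB_eq_chiral_prod chiral_prod_mult[symmetric]
    using lens assms(6) Bc_commute_entry valid_dc_disjoint[OF assms(4)] valid_dc_disjoint[OF assms(5)] fus
    by (intro chiral_prod_cong) (simp add: mu_def la1_def la2_def lzero_def)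
  then show ?thesis
    using lens assms(6)
    by (simp only: chiral_prod_mult chiral_prod_sign length_andL min.idem lB_eq_chiral_prod)
qed

section \<open>Framed algebras\<close>

locale framed_alg =
  fixes l r :: nat and sc :: "complex \<Rightarrow> 'v::ab_group_add \<Rightarrow> 'v"
    and G :: "IS list \<Rightarrow> 'v set" and mult :: "'v \<Rightarrow> 'v \<Rightarrow> 'v" and one :: 'v
  assumes framed: "framed_algebra l r sc G mult one"
begin

sublocale vector_space sc
  using framed unfolding framed_algebra_def by meson

lemma module_hom_mult_right: "module_hom sc sc (mult a)"
  using framed unfolding framed_algebra_def module_hom_iff_linear by meson

lemma module_hom_mult_left: "module_hom sc sc (\<lambda>a. mult a b)"
  using framed unfolding framed_algebra_def module_hom_iff_linear by meson

lemma subspace_grade: "subspace (G la)"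
  using framed unfolding framed_algebra_def by meson

lemma grade_outside: "la \<notin> lams l r \<Longrightarrow> G la = {0}"
  using framed unfolding framed_algebra_def by meson

lemma ex1_graded_decomp: "\<exists>!x. graded_decomp l r G v x"
  using framed unfolding framed_algebra_def by auto

lemma one_grade: "one \<in> G (lzero l r)"
  using framed unfolding framed_algebra_def by meson

lemma mult_one_right [simp]: "mult a one = a"
  using framed unfolding framed_algebra_def by blast

lemma sdim_Ints: "la \<in> lams l r \<Longrightarrow> G la \<noteq> {0} \<Longrightarrow> sdim l r la \<in> \<int>"
  using framed unfolding framed_algebra_def by meson

lemma mult_grade:
  "la1 \<in> lams l r \<Longrightarrow> la2 \<in> lams l r \<Longrightarrow> a \<in> G la1 \<Longrightarrow> b \<in> G la2 \<Longrightarrow>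
     mult a b \<in> span (\<Union>la\<in>lfus la1 la2. G la)"
  using framed unfolding framed_algebra_def by meson

lemma braiding:
  "\<lbrakk>la0 \<in> lams l r; la1 \<in> lams l r; la2 \<in> lams l r; la3 \<in> lams l r;
    a1 \<in> G la1; a2 \<in> G la2; a3 \<in> G la3; la' \<in> lA la0 la2 la1 la3\<rbrakk> \<Longrightarrow>
     comp l r G la0 (mult a2 (comp l r G la' (mult a1 a3))) =
       (\<Sum>la\<in>lA la0 la1 la2 la3. sc (lB l r la la' la0 la1 la2 la3)
          (comp l r G la0 (mult a1 (comp l r G la (mult a2 a3)))))"
  using framed unfolding framed_algebra_def by meson

lemma mult_zero_right [simp]: "mult a 0 = 0"
  and mult_zero_left [simp]: "mult 0 b = 0"
  and mult_scale_right: "mult a (sc c x) = sc c (mult a x)"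
  and mult_sum_right: "mult a (sum f A) = (\<Sum>x\<in>A. mult a (f x))"
  and mult_sum_left: "mult (sum f A) b = (\<Sum>x\<in>A. mult (f x) b)"
  using module_hom.zero[OF module_hom_mult_right] module_hom.zero[OF module_hom_mult_left]
    module_hom.scale[OF module_hom_mult_right]
    module_hom.sum[OF module_hom_mult_right] module_hom.sum[OF module_hom_mult_left]
  by simp_all

lemma zero_grade: "0 \<in> G la"
  using subspace_0[OF subspace_grade] .

lemma graded_decomp_comp: "graded_decomp l r G v (\<lambda>la. comp l r G la v)"
  unfolding comp_def using theI'[OF ex1_graded_decomp] by simp

lemma comp_eqI: "graded_decomp l r G v x \<Longrightarrow> comp l r G la v = x la"
  using graded_decomp_comp ex1_graded_decomp by metis

lemma comp_grade: "comp l r G la v \<in> G la"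
  using graded_decomp_comp[of v] zero_grade unfolding graded_decomp_def
  by (cases "la \<in> lams l r") auto

lemma comp_outside: "la \<notin> lams l r \<Longrightarrow> comp l r G la v = 0"
  using graded_decomp_comp[of v] unfolding graded_decomp_def by blast

lemma sum_comp: "(\<Sum>la\<in>lams l r. comp l r G la v) = v"
  using graded_decomp_comp[of v] unfolding graded_decomp_def by simp

lemma eq_if_comp_eq: "(\<And>la. la \<in> lams l r \<Longrightarrow> comp l r G la v = comp l r G la w) \<Longrightarrow> v = w"
  using sum_comp[of v] sum_comp[of w] by (metis sum.cong)

lemma module_hom_comp: "module_hom sc sc (comp l r G la)"
proof -
  have "comp l r G la (u + w) = comp l r G la u + comp l r G la w" for u w
    using comp_grade comp_outside subspace_add[OF subspace_grade]
    by (intro comp_eqI) (simp add: graded_decomp_def sum.distrib sum_comp)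
  moreover have "comp l r G la (sc c u) = sc c (comp l r G la u)" for c u
    using comp_grade comp_outside subspace_scale[OF subspace_grade]
    by (intro comp_eqI) (simp add: graded_decomp_def sum_comp flip: scale_sum_right)
  ultimately show ?thesis
    by (simp add: module_hom_def module_hom_axioms_def module_axioms)
qed

lemma comp_zero [simp]: "comp l r G la 0 = 0"
  using module_hom.zero[OF module_hom_comp] .

lemma comp_homogeneous:
  assumes "v \<in> G la"
  shows "comp l r G la' v = (if la' = la then v else 0)"
proof (rule comp_eqI)
  show "graded_decomp l r G v (\<lambda>k. if k = la then v else 0)"
  proof (cases "la \<in> lams l r")
    case True
    then show ?thesis
      using assms zero_grade finite_lams by (auto simp: graded_decomp_def sum.delta)
  next
    case False
    then have "v = 0"
      using assms grade_outside by blast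
    then show ?thesis
      using zero_grade by (simp add: graded_decomp_def cong: if_cong)
  qed
qed

lemma comp_eq_0_if_span:
  assumes "v \<in> span (\<Union>k\<in>K. G k)" "la \<notin> K"
  shows "comp l r G la v = 0"
proof (rule module_hom.eq_0_on_span[OF module_hom_comp _ assms(1)])
  fix x assume "x \<in> (\<Union>k\<in>K. G k)"
  then show "comp l r G la x = 0"
    using assms(2) comp_homogeneous by fastforce
qed

lemma comp_mult_eq_0:
  "la1 \<in> lams l r \<Longrightarrow> la2 \<in> lams l r \<Longrightarrow> a \<in> G la1 \<Longrightarrow> b \<in> G la2 \<Longrightarrow> la \<notin> lfus la1 la2 \<Longrightarrow>
     comp l r G la (mult a b) = 0"
  using comp_eq_0_if_span mult_grade by blast

lemma braiding_singleton:
  assumes "la0 \<in> lams l r" "la1 \<in> lams l r" "la2 \<in> lams l r" "la3 \<in> lams l r"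
    and "a1 \<in> G la1" "a2 \<in> G la2" "a3 \<in> G la3"
    and "la' \<in> lA la0 la2 la1 la3" "lA la0 la1 la2 la3 = {la}"
  shows "comp l r G la0 (mult a2 (comp l r G la' (mult a1 a3))) =
           sc (lB l r la la' la0 la1 la2 la3) (comp l r G la0 (mult a1 (comp l r G la (mult a2 a3))))"
  using braiding[OF assms(1-8)] assms(9) by simp

lemma mult_eq_sum_comp:
  "mult x y = (\<Sum>j\<in>lams l r. \<Sum>k\<in>lams l r. mult (comp l r G j x) (comp l r G k y))"
proof -
  have "mult x y = mult (\<Sum>j\<in>lams l r. comp l r G j x) (\<Sum>k\<in>lams l r. comp l r G k y)"
    by (simp only: sum_comp)
  also have "\<dots> = (\<Sum>j\<in>lams l r. \<Sum>k\<in>lams l r. mult (comp l r G j x) (comp l r G k y))"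
    by (simp only: mult_sum_left mult_sum_right) (rule sum.swap)
  finally show ?thesis .
qed

lemma comp_mult_commute:
  assumes x: "la1 \<in> lams l r" "x \<in> G la1" and y: "la2 \<in> lams l r" "y \<in> G la2"
    and la0: "la0 \<in> lams l r"
  shows "comp l r G la0 (mult y x) = sc (lB l r la2 la1 la0 la1 la2 (lzero l r)) (comp l r G la0 (mult x y))"
proof (cases "la0 \<in> lfus la1 la2")
  case True
  have lens: "length la1 = l + r" "length la2 = l + r" "length la0 = l + r"
    using x y la0 by (simp_all add: lams_iff)
  have "la1 \<in> lA la0 la2 la1 (lzero l r)" and "lA la0 la1 la2 (lzero l r) = {la2}"
    using True lens lA_unit lfus_commute unfolding lzero_def by simp_all
  from braiding_singleton[OF la0 x(1) y(1) _ x(2) y(2) one_grade this]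
  show ?thesis
    using comp_homogeneous[OF x(2)] comp_homogeneous[OF y(2)] by (simp add: lzero_def lams_iff)
next
  case False
  then have "la0 \<notin> lfus la2 la1"
    using x y lfus_commute by (simp add: lams_iff)
  then show ?thesis
    using comp_mult_eq_0[OF x(1) y(1) x(2) y(2) False] comp_mult_eq_0[OF y(1) x(1) y(2) x(2)] by simp
qed

context
  fixes mu a
  assumes mu: "mu \<in> lams l r" "simple_current mu" and a: "a \<in> G mu"
begin

lemma mult_simple_current_grade:
  assumes "la \<in> lams l r" "x \<in> G la"
  shows "mult a x \<in> G (lfuse_simple mu la)"
proof -
  have "lfus mu la = {lfuse_simple mu la}"
    using assms mu by (intro lfus_simple_current) (auto simp: lams_iff)
  then show ?thesis
    using mult_grade[OF mu(1) assms(1) a assms(2)] span_eq_iff[THEN iffD2, OF subspace_grade] by simp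
qed

lemma comp_mult_simple_current:
  assumes "la \<in> lams l r"
  shows "comp l r G (lfuse_simple mu la) (mult a m) = mult a (comp l r G la m)"
proof -
  have inj: "lfuse_simple mu la = lfuse_simple mu k \<longleftrightarrow> k = la" if "k \<in> lams l r" for k
    using that assms mu lfuse_simple_involutive unfolding lams_iff by metis
  have "comp l r G (lfuse_simple mu la) (mult a m) =
          (\<Sum>k\<in>lams l r. comp l r G (lfuse_simple mu la) (mult a (comp l r G k m)))"
    using module_hom.sum[OF module_hom_comp] by (metis sum_comp mult_sum_right)
  also have "\<dots> = (\<Sum>k\<in>lams l r. if k = la then mult a (comp l r G k m) else 0)"
    using comp_homogeneous[OF mult_simple_current_grade[OF _ comp_grade]] inj
    by (intro sum.cong) auto
  also have "\<dots> = mult a (comp l r G la m)"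
    using assms finite_lams by simp
  finally show ?thesis .
qed

lemma mult_simple_current_comp_mult:
  assumes x1: "la1 \<in> lams l r" "x1 \<in> G la1" and x3: "la3 \<in> lams l r" "x3 \<in> G la3"
    and la: "la \<in> lams l r"
  shows "mult a (comp l r G la (mult x1 x3)) =
           sc (lB l r (lfuse_simple mu la3) la (lfuse_simple mu la) la1 mu la3)
             (comp l r G (lfuse_simple mu la) (mult x1 (mult a x3)))"
proof (cases "la \<in> lfus la1 la3")
  case True
  have lens: "length mu = l + r" "length la1 = l + r" "length la3 = l + r" "length la = l + r"
    using mu x1 x3 la by (simp_all add: lams_iff)
  have "la \<in> lA (lfuse_simple mu la) mu la1 la3"
    using True lens mu lA_simple_current_left lfuse_simple_involutive by simp
  moreover have "lA (lfuse_simple mu la) la1 mu la3 = {lfuse_simple mu la3}"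
    using True lens mu lA_simple_current_middle lfuse_simple_mem_lfus_iff by simp
  ultimately have "comp l r G (lfuse_simple mu la) (mult a (comp l r G la (mult x1 x3))) =
      sc (lB l r (lfuse_simple mu la3) la (lfuse_simple mu la) la1 mu la3)
        (comp l r G (lfuse_simple mu la) (mult x1 (comp l r G (lfuse_simple mu la3) (mult a x3))))"
    by (rule braiding_singleton[OF lfuse_simple_lams[OF mu(1) la] x1(1) mu(1) x3(1) x1(2) a x3(2)])
  then show ?thesis
    using comp_homogeneous[OF mult_simple_current_grade[OF la comp_grade]]
      comp_homogeneous[OF mult_simple_current_grade[OF x3]]
    by simp
next
  case False
  then have "lfuse_simple mu la \<notin> lfus la1 (lfuse_simple mu la3)"
    using mu x1 x3 la lfuse_simple_mem_lfus_iff by (simp add: lams_iff)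
  then show ?thesis
    using comp_mult_eq_0[OF x1(1) x3(1) x1(2) x3(2) False]
      comp_mult_eq_0[OF x1(1) lfuse_simple_lams[OF mu(1) x3(1)] x1(2) mult_simple_current_grade[OF x3]]
    by simp
qed

lemma comp_mult_mult_simple_current:
  assumes x1: "la1 \<in> lams l r" "x1 \<in> G la1" and x3: "la3 \<in> lams l r" "x3 \<in> G la3"
    and la0: "la0 \<in> lams l r"
  shows "comp l r G la0 (mult x1 (mult a x3)) =
           sc (lB l r (lfuse_simple mu la0) (lfuse_simple mu la3) la0 mu la1 la3)
             (mult a (comp l r G (lfuse_simple mu la0) (mult x1 x3)))"
proof (cases "la0 \<in> lfus la1 (lfuse_simple mu la3)")
  case True
  have lens: "length mu = l + r" "length la1 = l + r" "length la3 = l + r" "length la0 = l + r"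
    using mu x1 x3 la0 by (simp_all add: lams_iff)
  have "lfuse_simple mu la3 \<in> lA la0 la1 mu la3"
    using True lens mu lA_simple_current_middle by simp
  moreover have "lA la0 mu la1 la3 = {lfuse_simple mu la0}"
    using True lens mu lA_simple_current_left lfuse_simple_mem_lfus_iff[of mu "lfuse_simple mu la0"]
      lfuse_simple_involutive by simp
  ultimately have "comp l r G la0 (mult x1 (comp l r G (lfuse_simple mu la3) (mult a x3))) =
      sc (lB l r (lfuse_simple mu la0) (lfuse_simple mu la3) la0 mu la1 la3)
        (comp l r G la0 (mult a (comp l r G (lfuse_simple mu la0) (mult x1 x3))))"
    by (rule braiding_singleton[OF la0 mu(1) x1(1) x3(1) a x1(2) x3(2)])
  moreover have "lfuse_simple mu (lfuse_simple mu la0) = la0"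
    using lfuse_simple_involutive[OF mu(2)] lens by simp
  ultimately show ?thesis
    using comp_homogeneous[OF mult_simple_current_grade[OF lfuse_simple_lams[OF mu(1) la0] comp_grade]]
      comp_homogeneous[OF mult_simple_current_grade[OF x3]]
    by simp
next
  case False
  then have "lfuse_simple mu la0 \<notin> lfus la1 la3"
    using mu x1 x3 la0 lfuse_simple_mem_lfus_iff[of mu "lfuse_simple mu la0"] lfuse_simple_involutive
    by (simp add: lams_iff)
  then show ?thesis
    using comp_mult_eq_0[OF x1(1) x3(1) x1(2) x3(2)]
      comp_mult_eq_0[OF x1(1) lfuse_simple_lams[OF mu(1) x3(1)] x1(2) mult_simple_current_grade[OF x3] False]
    by simp
qed

lemma mult_simple_current_comp_eq_0:
  "mult a y = 0 \<Longrightarrow> k \<in> lams l r \<Longrightarrow> mult a (comp l r G k y) = 0"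
  using comp_mult_simple_current[of k y] by simp

lemma mult_simple_current_mult_eq_0:
  assumes "mult a y = 0"
  shows "mult a (mult s y) = 0"
proof -
  have "mult a (mult (comp l r G j s) (comp l r G k y)) = 0" if "j \<in> lams l r" "k \<in> lams l r" for j k
  proof -
    let ?x = "mult (comp l r G j s) (comp l r G k y)"
    have "mult a ?x = (\<Sum>la\<in>lams l r. mult a (comp l r G la ?x))"
      by (metis sum_comp mult_sum_right)
    also have "\<dots> = 0"
      using mult_simple_current_comp_mult[OF that(1) comp_grade that(2) comp_grade]
        mult_simple_current_comp_eq_0[OF assms that(2)]
      by (simp add: mult_scale_right)
    finally show ?thesis .
  qed
  then show ?thesis
    by (subst mult_eq_sum_comp) (simp add: mult_sum_right)
qed

lemma fa_ideal_kernel_mult: "fa_ideal l r sc G mult {x. mult a x = 0}"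
proof -
  let ?M = "{x. mult a x = 0}"
  have subspace: "subspace ?M"
    by (rule module_hom.subspace_kernel[OF module_hom_mult_right])
  have "?M \<subseteq> span (\<Union>la\<in>lams l r. ?M \<inter> G la)"
  proof
    fix y assume "y \<in> ?M"
    then have "(\<Sum>k\<in>lams l r. comp l r G k y) \<in> span (\<Union>la\<in>lams l r. ?M \<inter> G la)"
      using mult_simple_current_comp_eq_0 comp_grade by (intro span_sum span_base) blast
    then show "y \<in> span (\<Union>la\<in>lams l r. ?M \<inter> G la)"
      by (simp add: sum_comp)
  qed
  moreover have "span (\<Union>la\<in>lams l r. ?M \<inter> G la) \<subseteq> ?M"
    using subspace by (intro span_minimal) auto
  ultimately show ?thesis
    unfolding fa_ideal_def using subspace mult_simple_current_mult_eq_0 by blast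
qed

end

text \<open>Entrywise, the weights of \<open>\<mu>\<lambda>\<close> and \<open>\<lambda>\<close> differ by half the indicator of \<open>d\<^sub>\<bottom>\<alpha>\<close> modulo \<open>\<int>\<close>,
  and adding the weight of \<open>\<mu>\<close> turns this into the indicator of \<open>d\<alpha>\<close>; FA1 does the rest.\<close>

lemma even_wt_simple_current_shift:
  fixes d c \<alpha> :: "bool list"
  assumes "length d = l + r" "length c = l + r" "length \<alpha> = l + r"
    and "G (toIS (replicate (l + r) False) \<alpha>) \<noteq> {0}" "G (toIS d c) \<noteq> {0}"
    and "G (toIS d (xorL c (andL (perpL d) \<alpha>))) \<noteq> {0}"
  shows "even (wt l (andL (perpL d) \<alpha>))" and "even (wt l (andL d \<alpha>))"
proof -
  let ?mu = "toIS (replicate (l + r) False) \<alpha>" and ?la = "toIS d c"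
    and ?la' = "toIS d (xorL c (andL (perpL d) \<alpha>))"
  have "sdim l r ?mu \<in> \<int>" "sdim l r ?la \<in> \<int>" "sdim l r ?la' \<in> \<int>"
    using assms by (simp_all add: sdim_Ints lams_iff)
  then have sum_Ints: "chiral_sum l r (\<lambda>i. hval (?la' ! i) - hval (?la ! i)) \<in> \<int>"
    "chiral_sum l r (\<lambda>i. hval (?la' ! i) - hval (?la ! i) + hval (?mu ! i)) \<in> \<int>"
    by (simp_all only: chiral_sum_diff chiral_sum_add sdim_eq_chiral_sum[symmetric] Ints_diff Ints_add)
  show "even (wt l (andL (perpL d) \<alpha>))"
  proof (rule even_wt_if_half_Ints[OF _ sum_Ints(1)])
    fix i assume "i < l + r"
    then show "hval (?la' ! i) - hval (?la ! i) - (if andL (perpL d) \<alpha> ! i then 1 else 0) / 2 \<in> \<int>"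
      using assms(1-3) hval_fuse_simple_dc_label(1)[of "d ! i" "c ! i" "\<alpha> ! i"] by simp
  qed (use assms(1,3) in simp)
  show "even (wt l (andL d \<alpha>))"
  proof (rule even_wt_if_half_Ints[OF _ sum_Ints(2)])
    fix i assume "i < l + r"
    then show "hval (?la' ! i) - hval (?la ! i) + hval (?mu ! i) - (if andL d \<alpha> ! i then 1 else 0) / 2 \<in> \<int>"
      using assms(1-3) hval_fuse_simple_dc_label(2)[of "d ! i" "c ! i" "\<alpha> ! i"] by simp
  qed (use assms(1,3) in simp)
qed

lemma comp_mult_simple_current_assoc:
  fixes \<alpha> d1 c1 d2 c2 :: "bool list"
  defines "mu \<equiv> toIS (replicate (l + r) False) \<alpha>"
  assumes "valid_dc l r d1 c1" "valid_dc l r d2 c2" "length \<alpha> = l + r"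
    and a: "a \<in> G mu" and v1: "v1 \<in> G (toIS d1 c1)" and v2: "v2 \<in> G (toIS d2 c2)"
    and la: "la \<in> lams l r"
  shows "comp l r G (lfuse_simple mu la) (mult (mult a v1) v2) =
           sc ((-1) powi wt l (andL (andL d1 \<alpha>) c2)) (mult a (comp l r G la (mult v1 v2)))"
proof -
  let ?K = "(-1) powi wt l (andL (andL d1 \<alpha>) c2)" and ?la1 = "toIS d1 c1" and ?la2 = "toIS d2 c2"
  let ?rho = "lfuse_simple mu ?la1" and ?la0 = "lfuse_simple mu la"
  let ?D = "lB l r ?la2 ?rho ?la0 ?rho ?la2 (lzero l r)"
    and ?N1 = "lB l r la ?rho ?la0 mu ?la2 ?la1" and ?N2 = "lB l r ?la2 ?la1 la ?la1 ?la2 (lzero l r)"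
  let ?Z = "comp l r G ?la0 (mult (mult a v1) v2)" and ?W = "mult a (comp l r G la (mult v1 v2))"
  have mu: "mu \<in> lams l r" "simple_current mu"
    using assms(4) simple_current_toIS by (simp_all add: mu_def lams_iff)
  have lams: "?la1 \<in> lams l r" "?la2 \<in> lams l r" "?la0 \<in> lams l r" "?rho \<in> lams l r"
    using assms(2,3) la mu lfuse_simple_lams by (simp_all add: valid_dc_def lams_iff)
  have involutive: "lfuse_simple mu ?la0 = la"
    using lfuse_simple_involutive[OF mu(2)] la mu(1) by (simp add: lams_iff)
  have av1: "mult a v1 \<in> G ?rho"
    by (rule mult_simple_current_grade[OF mu a lams(1) v1])
  have "sc ?D ?Z = comp l r G ?la0 (mult v2 (mult a v1))"
    using comp_mult_commute[OF lams(4) av1 lams(2) v2 lams(3)] by simp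
  also have "\<dots> = sc ?N1 (mult a (comp l r G la (mult v2 v1)))"
    using comp_mult_mult_simple_current[OF mu a lams(2) v2 lams(1) v1 lams(3)] involutive by simp
  also have "\<dots> = sc (?N1 * ?N2) ?W"
    using comp_mult_commute[OF lams(1) v1 lams(2) v2 la] by (simp add: mult_scale_right)
  also have "\<dots> = sc (?K * ?D) ?W"
  proof (cases "la \<in> lfus ?la1 ?la2")
    case True
    then show ?thesis
      using lB_simple_current_commute[OF assms(2-4)] by (simp add: mu_def)
  next
    case False
    then show ?thesis
      using comp_mult_eq_0[OF lams(1,2) v1 v2] by simp
  qed
  finally have "sc ?D ?Z = sc ?D (sc ?K ?W)"
    by simp
  moreover have "?D \<noteq> 0"
    unfolding lB_eq_chiral_prod by (intro chiral_prod_nonzero Bc_nonzero)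
  ultimately show ?thesis
    using scale_cancel_left by blast
qed

end

section \<open>Simple framed algebras\<close>

locale simple_framed_alg = framed_alg +
  assumes ideal_trivial: "fa_ideal l r sc G mult M \<Longrightarrow> M = {0} \<or> M = UNIV"
begin

lemma mult_simple_current_eq_0_iff:
  assumes "mu \<in> lams l r" "simple_current mu" "a \<in> G mu" "a \<noteq> 0"
  shows "mult a x = 0 \<longleftrightarrow> x = 0"
proof -
  have "{x. mult a x = 0} \<noteq> UNIV"
  proof
    assume "{x. mult a x = 0} = UNIV"
    then have "mult a one = 0"
      by blast
    with assms(4) show False
      by simp
  qed
  then have "{x. mult a x = 0} = {0}"
    using ideal_trivial[OF fa_ideal_kernel_mult[OF assms(1-3)]] by blast
  then show ?thesis
    by blast
qed

lemma even_wt_simple_current_action: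
  fixes \<alpha> d c :: "bool list"
  assumes "valid_dc l r (replicate (l + r) False) \<alpha>" "valid_dc l r d c"
    and "a \<in> Sdc G (replicate (l + r) False) \<alpha>" "v \<in> Sdc G d c" "a \<noteq> 0" "v \<noteq> 0"
  shows "even (wt l (andL (perpL d) \<alpha>))" and "even (wt l (andL d \<alpha>))"
proof -
  let ?mu = "toIS (replicate (l + r) False) \<alpha>"
  have lens: "length \<alpha> = l + r" "length d = l + r" "length c = l + r"
    using assms(1,2) by (simp_all add: valid_dc_def)
  have mu: "?mu \<in> lams l r" "simple_current ?mu"
    using lens simple_current_toIS by (simp_all add: lams_iff)
  have "mult a v \<in> G (toIS d (xorL c (andL (perpL d) \<alpha>)))"
    using mult_simple_current_grade[OF mu _ _ assms(4)[unfolded Sdc_def]] assms(3) lens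
    by (simp add: Sdc_def lams_iff lfuse_simple_toIS)
  moreover have "mult a v \<noteq> 0"
    using mult_simple_current_eq_0_iff[OF mu] assms(3-6) by (simp add: Sdc_def)
  ultimately show "even (wt l (andL (perpL d) \<alpha>))" and "even (wt l (andL d \<alpha>))"
    using even_wt_simple_current_shift[OF lens(2,3,1)] assms(3-6) unfolding Sdc_def by blast+
qed

lemma simple_current_comp_mult_exchange:
  fixes \<alpha> d1 c1 d2 c2 \<gamma> :: "bool list"
  assumes valid: "valid_dc l r (replicate (l + r) False) \<alpha>" "valid_dc l r d1 c1" "valid_dc l r d2 c2"
    and a: "a \<in> Sdc G (replicate (l + r) False) \<alpha>" and v1: "v1 \<in> Sdc G d1 c1" and v2: "v2 \<in> Sdc G d2 c2"
    and \<gamma>: "\<gamma> \<in> Z2sub (andL d1 d2)"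
  shows "mult a (comp l r G
            (toIS (xorL d1 d2) (xorL (andL (perpL (xorL d1 d2)) (xorL c1 c2)) \<gamma>)) (mult v1 v2)) =
         sc (\<i> powi (wt l (andL d1 \<alpha>))
             * (-1) powi (wt l (andL \<alpha> c1) + wt l (andL (andL d1 d2) \<alpha>)
                          + wt l (andL \<gamma> \<alpha>) + wt l (andL (andL d1 \<alpha>) c2)))
           (comp l r G
              (toIS (xorL d1 d2) (xorL (andL (perpL (xorL d1 d2)) (xorL (xorL c1 c2) \<alpha>)) \<gamma>))
              (mult v1 (mult a v2)))"
proof (cases "a = 0 \<or> v1 = 0")
  case True
  then show ?thesis
    by auto
next
  case False
  let ?mu = "toIS (replicate (l + r) False) \<alpha>"
    and ?la = "toIS (xorL d1 d2) (xorL (andL (perpL (xorL d1 d2)) (xorL c1 c2)) \<gamma>)"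
  have lens: "length \<alpha> = l + r" "length d1 = l + r" "length c1 = l + r" "length d2 = l + r"
    "length c2 = l + r" "length \<gamma> = l + r"
    using valid \<gamma> by (simp_all add: valid_dc_def Z2sub_def)
  have mu: "?mu \<in> lams l r" "simple_current ?mu"
    using lens simple_current_toIS by (simp_all add: lams_iff)
  have lams: "toIS d1 c1 \<in> lams l r" "toIS d2 c2 \<in> lams l r" "?la \<in> lams l r"
    using lens by (simp_all add: lams_iff)
  have "xorL (xorL (andL (perpL (xorL d1 d2)) (xorL c1 c2)) \<gamma>) (andL (perpL (xorL d1 d2)) \<alpha>) =
        xorL (andL (perpL (xorL d1 d2)) (xorL (xorL c1 c2) \<alpha>)) \<gamma>"
    using lens by (intro nth_equalityI) auto
  then have shift: "lfuse_simple ?mu ?la =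
      toIS (xorL d1 d2) (xorL (andL (perpL (xorL d1 d2)) (xorL (xorL c1 c2) \<alpha>)) \<gamma>)"
    using lens by (simp add: lfuse_simple_toIS)
  have "even (wt l (andL d1 \<alpha>))"
    using even_wt_simple_current_action(2)[OF valid(1,2) a v1] False by blast
  then show ?thesis
    using mult_simple_current_comp_mult[OF mu _ lams(1) _ lams(2) _ lams(3)] a v1 v2
      lB_simple_current_exchange[OF valid(2,3) lens(1) \<gamma>] shift
    by (simp add: Sdc_def power_int_add mult.assoc)
qed

lemma simple_current_mult_assoc:
  fixes \<alpha> d1 c1 d2 c2 :: "bool list"
  assumes valid: "valid_dc l r (replicate (l + r) False) \<alpha>" "valid_dc l r d1 c1" "valid_dc l r d2 c2"
    and a: "a \<in> Sdc G (replicate (l + r) False) \<alpha>" and v1: "v1 \<in> Sdc G d1 c1" and v2: "v2 \<in> Sdc G d2 c2"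
  shows "mult a (mult v1 v2) =
           sc ((-1) powi (wt l (andL (perpL d1) \<alpha>) + wt l (andL (andL d1 \<alpha>) c2))) (mult (mult a v1) v2)"
proof (cases "a = 0 \<or> v1 = 0")
  case True
  then show ?thesis
    by (auto simp: scale_zero_right)
next
  case False
  let ?mu = "toIS (replicate (l + r) False) \<alpha>" and ?K = "(-1) powi wt l (andL (andL d1 \<alpha>) c2)"
  have len: "length \<alpha> = l + r"
    using valid(1) by (simp add: valid_dc_def)
  have mu: "?mu \<in> lams l r" "simple_current ?mu"
    using len simple_current_toIS by (simp_all add: lams_iff)
  have "mult (mult a v1) v2 = sc ?K (mult a (mult v1 v2))"
  proof (rule eq_if_comp_eq)
    fix la assume la: "la \<in> lams l r"
    then have la': "lfuse_simple ?mu la \<in> lams l r" and la_eq: "la = lfuse_simple ?mu (lfuse_simple ?mu la)"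
      using lfuse_simple_lams[OF mu(1)] lfuse_simple_involutive[OF mu(2)] mu(1) by (simp_all add: lams_iff)
    show "comp l r G la (mult (mult a v1) v2) = comp l r G la (sc ?K (mult a (mult v1 v2)))"
      using comp_mult_simple_current_assoc[OF valid(2,3) len _ _ _ la'] a v1 v2
        comp_mult_simple_current[OF mu _ la'] module_hom.scale[OF module_hom_comp]
      by (subst (1 2) la_eq) (simp add: Sdc_def)
  qed
  moreover have "even (wt l (andL (perpL d1) \<alpha>))"
    using even_wt_simple_current_action(1)[OF valid(1,2) a v1] False by blast
  ultimately show ?thesis
    by (simp add: power_int_add)
qed

end

theorem mainTheorem11:
  fixes l r :: nat
    and sc :: "complex \<Rightarrow> 'v::ab_group_add \<Rightarrow> 'v"
    and G :: "IS list \<Rightarrow> 'v set"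
    and mult :: "'v \<Rightarrow> 'v \<Rightarrow> 'v"
    and one :: 'v
    and \<alpha> d1 c1 d2 c2 :: "bool list"
    and a v1 v2 :: 'v
  assumes "simple_framed_algebra l r sc G mult one"
    and "\<alpha> \<in> C_S l r G"
    and "(d1, c1) \<in> I_S l r G"
    and "(d2, c2) \<in> I_S l r G"
    and "a \<in> Sdc G (replicate (l + r) False) \<alpha>"
    and "v1 \<in> Sdc G d1 c1"
    and "v2 \<in> Sdc G d2 c2"
  shows "(\<forall>\<gamma>\<in>Z2sub (andL d1 d2).
            mult a (comp l r G
               (toIS (xorL d1 d2) (xorL (andL (perpL (xorL d1 d2)) (xorL c1 c2)) \<gamma>))
               (mult v1 v2))
          = sc (\<i> powi (wt l (andL d1 \<alpha>))
                * (-1) powi (wt l (andL \<alpha> c1) + wt l (andL (andL d1 d2) \<alpha>)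
                             + wt l (andL \<gamma> \<alpha>) + wt l (andL (andL d1 \<alpha>) c2)))
              (comp l r G
                 (toIS (xorL d1 d2) (xorL (andL (perpL (xorL d1 d2)) (xorL (xorL c1 c2) \<alpha>)) \<gamma>))
                 (mult v1 (mult a v2))))
       \<and> mult a (mult v1 v2)
          = sc ((-1) powi (wt l (andL (perpL d1) \<alpha>) + wt l (andL (andL d1 \<alpha>) c2)))
              (mult (mult a v1) v2)"
proof -
  interpret simple_framed_alg l r sc G mult one
    using assms(1)
    unfolding simple_framed_algebra_def simple_framed_alg_def simple_framed_alg_axioms_def framed_alg_def
    by blast
  have valid: "valid_dc l r (replicate (l + r) False) \<alpha>" "valid_dc l r d1 c1" "valid_dc l r d2 c2"
    using assms(2-4) by (simp_all add: C_S_def I_S_def)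
  show ?thesis
    using simple_current_comp_mult_exchange[OF valid assms(5-7)]
      simple_current_mult_assoc[OF valid assms(5-7)]
    by blast
qed

end
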